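(* Let $n\ge2$ and $1\le m\le n-1$ be integers and let $\alpha$ be real with $n-m<\alpha<m(n-m)$. Then for primes $p$ there exists a subset $G\subset G(n,n-m)$ such that $|G|\approx p^{\alpha}$ and for every $\xi\in\mathbb{F}_p^n\setminus\{0\}$, \[ |\{W\in G:\ \xi\in Per(W)\}|\lesssim |G|\,p^{-(n-m)}. \]
   Context: $\mathbb{F}_p$ is the field with $p$ elements and $G(n,k)$ is the set of all $k$-dimensional linear subspaces of $\mathbb{F}_p^n$. For a subspace $W$, $Per(W)=\{x\in\mathbb{F}_p^n:\ x\cdot w=0\ \text{for all } w\in W\}$ with $x\cdot w=\sum_i x_iw_i$. $|J|$ denotes cardinality. $f\lesssim g$ means $f\le Cg$ with $C$ independent of $p$ and $\xi$; $f\approx g$ means $f\lesssim g$ and $g\lesssim f$. *)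

theory Defs
  imports Complex_Main "HOL-Computational_Algebra.Primes"
begin

text \<open>Vectors of F_p^n: functions nat => nat with entries in {0..<p} at coordinates
 i < n and 0 elsewhere; arithmetic is taken mod p.\<close>

definition Fpn :: "nat \<Rightarrow> nat \<Rightarrow> (nat \<Rightarrow> nat) set" where
  "Fpn p n = {x. (\<forall>i<n. x i < p) \<and> (\<forall>i\<ge>n. x i = 0)}"

definition zero_vec :: "nat \<Rightarrow> nat" where
  "zero_vec = (\<lambda>i. 0)"

definition lin_comb :: "nat \<Rightarrow> (nat \<Rightarrow> nat) list \<Rightarrow> (nat \<Rightarrow> nat) \<Rightarrow> (nat \<Rightarrow> nat)" where
  "lin_comb p vs c = (\<lambda>i. (\<Sum>j<length vs. c j * (vs ! j) i) mod p)"

definition span_p :: "nat \<Rightarrow> (nat \<Rightarrow> nat) list \<Rightarrow> (nat \<Rightarrow> nat) set" where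
  "span_p p vs = {lin_comb p vs c | c. True}"

definition lin_indep_p :: "nat \<Rightarrow> (nat \<Rightarrow> nat) list \<Rightarrow> bool" where
  "lin_indep_p p vs \<longleftrightarrow> (\<forall>c. lin_comb p vs c = zero_vec \<longrightarrow> (\<forall>j<length vs. c j mod p = 0))"

definition Gr :: "nat \<Rightarrow> nat \<Rightarrow> nat \<Rightarrow> (nat \<Rightarrow> nat) set set" where
  "Gr p n k = {span_p p vs | vs. length vs = k \<and> set vs \<subseteq> Fpn p n \<and> lin_indep_p p vs}"

definition dot_p :: "nat \<Rightarrow> nat \<Rightarrow> (nat \<Rightarrow> nat) \<Rightarrow> (nat \<Rightarrow> nat) \<Rightarrow> nat" where
  "dot_p p n x w = (\<Sum>i<n. x i * w i) mod p"

definition Per :: "nat \<Rightarrow> nat \<Rightarrow> (nat \<Rightarrow> nat) set \<Rightarrow> (nat \<Rightarrow> nat) set" where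
  "Per p n W = {x \<in> Fpn p n. \<forall>w\<in>W. dot_p p n x w = 0}"

end

theory Submission
  imports Defs "HOL-Computational_Algebra.Polynomial" "HOL-Number_Theory.Cong" "HOL-Library.FuncSet"
begin

text \<open>The subspaces are graphs: for B = (B_0, ..., B_{k-1}) with rows in F_p^m, W_B is the row
space of the matrix (I_k | B). A vector \<xi> = (\<xi>', \<xi>'') lies in Per(W_B) iff
\<xi>'_i + \<xi>''\<cdot>B_i = 0 for every i < k. Each row B_i is drawn independently from a family R_i, so
|G| is the product of the |R_i|. If \<xi>'' = 0 and \<xi> \<noteq> 0 one of these conditions fails for every
B. Otherwise each condition is a nontrivial affine equation in B_i, and R_i is a piece of a
moment curve, B_i = (x_0, ..., x_{a-1}, t, t^2, ..., t^{m-a} + s): fixing all parameters but one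
turns the equation into a nonzero polynomial of degree at most m in the remaining one, so it
holds on at most a fraction m/p of R_i. Distributing the exponents a_i and letting s range over
{0..<s_0} in one row only gives |G| = p^d s_0 with d = \<lfloor>\<alpha>\<rfloor> and s_0 \<approx> p^(\<alpha> - d).\<close>

lemma roots_mod_prime_subset_synthetic_div:
  fixes f :: "int poly"
  assumes p: "prime p" and t0: "t0 < p" "int p dvd poly f (int t0)"
  shows "{t\<in>{..<p}. int p dvd poly f (int t)}
           \<subseteq> insert t0 {t\<in>{..<p}. int p dvd poly (synthetic_div f (int t0)) (int t)}"
proof
  define q where "q = synthetic_div f (int t0)"
  have fq: "f = [:- int t0, 1:] * q + [:poly f (int t0):]"
    using synthetic_div_correct'[of "int t0" f] unfolding q_def by simp
  fix t assume t: "t \<in> {t\<in>{..<p}. int p dvd poly f (int t)}"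
  have "poly f (int t) = (int t - int t0) * poly q (int t) + poly f (int t0)"
    by (subst fq) (simp add: algebra_simps)
  with t t0(2) have "int p dvd (int t - int t0) * poly q (int t)"
    by (metis (no_types, lifting) dvd_add_left_iff mem_Collect_eq)
  then have "int p dvd int t - int t0 \<or> int p dvd poly q (int t)"
    using p by (simp add: prime_dvd_mult_iff)
  moreover have "t = t0" if "int p dvd int t - int t0"
  proof (rule ccontr)
    assume "t \<noteq> t0"
    with dvd_imp_le_int[OF _ that] t t0(1) show False by auto
  qed
  ultimately show "t \<in> insert t0 {t\<in>{..<p}. int p dvd poly q (int t)}"
    using t by auto
qed

lemma card_roots_mod_prime:
  fixes f :: "int poly"
  assumes p: "prime p" and nonzero: "\<exists>j. \<not> int p dvd coeff f j"
  shows "card {t\<in>{..<p}. int p dvd poly f (int t)} \<le> degree f"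
  using nonzero
proof (induction "degree f" arbitrary: f rule: less_induct)
  case less
  show ?case
  proof (cases "{t\<in>{..<p}. int p dvd poly f (int t)} = {}")
    case True
    then show ?thesis by (metis card.empty le0)
  next
    case False
    then obtain t0 where t0: "t0 < p" "int p dvd poly f (int t0)" by auto
    define q where "q = synthetic_div f (int t0)"
    have fq: "f = [:- int t0, 1:] * q + [:poly f (int t0):]"
      using synthetic_div_correct'[of "int t0" f] unfolding q_def by simp
    have q_nonzero: "\<exists>j. \<not> int p dvd coeff q j"
    proof (rule ccontr)
      assume "\<not> ?thesis"
      then have "int p dvd coeff f j" for j
        using t0(2) by (subst fq) (auto simp: coeff_mult coeff_pCons intro!: dvd_sum split: nat.split)
      with less.prems show False by blast
    qed
    have "degree f \<noteq> 0"
    proof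
      assume "degree f = 0"
      then obtain c where "f = [:c:]" using degree_eq_zeroE by blast
      with less.prems t0(2) show False
        by (auto simp: coeff_pCons split: nat.splits) (metis Suc_pred)
    qed
    moreover have degq: "degree q = degree f - 1"
      unfolding q_def by (rule degree_synthetic_div)
    ultimately have IH: "card {t\<in>{..<p}. int p dvd poly q (int t)} \<le> degree q"
      using less.hyps[of q] q_nonzero by simp
    have "card {t\<in>{..<p}. int p dvd poly f (int t)} \<le> card (insert t0 {t\<in>{..<p}. int p dvd poly q (int t)})"
      unfolding q_def by (intro card_mono roots_mod_prime_subset_synthetic_div[OF p t0]) auto
    also have "\<dots> \<le> Suc (card {t\<in>{..<p}. int p dvd poly q (int t)})"
      by (rule card_insert_le_m1) auto
    finally show ?thesis using IH degq \<open>degree f \<noteq> 0\<close> by linarith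
  qed
qed

lemma card_PiE_filter_le_slices:
  assumes "finite I" and "j \<in> I" and "\<And>i. i \<in> I \<Longrightarrow> finite (X i)"
    and slice: "\<And>z. z \<in> PiE (I - {j}) X \<Longrightarrow> card {v\<in>X j. Q (z(j:=v))} \<le> e"
  shows "card {x\<in>PiE I X. Q x} * card (X j) \<le> e * card (PiE I X)"
proof -
  define Z where "Z = PiE (I - {j}) X"
  define T where "T = (SIGMA z:Z. {v\<in>X j. Q (z(j:=v))})"
  have finZ: "finite Z" unfolding Z_def using assms by (intro finite_PiE) auto
  have "{x\<in>PiE I X. Q x} \<subseteq> (\<lambda>(z,v). z(j:=v)) ` T"
  proof
    fix x assume x: "x \<in> {x\<in>PiE I X. Q x}"
    define z where "z = restrict x (I - {j})"
    have "x = z(j := x j)"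
      using x \<open>j \<in> I\<close> by (auto simp: z_def PiE_iff extensional_def)
    moreover have "(z, x j) \<in> T"
      using x \<open>j \<in> I\<close> calculation by (auto simp: T_def Z_def z_def PiE_iff)
    ultimately show "x \<in> (\<lambda>(z,v). z(j:=v)) ` T" by force
  qed
  then have "card {x\<in>PiE I X. Q x} \<le> card ((\<lambda>(z,v). z(j:=v)) ` T)"
    by (intro card_mono) (use finZ assms in \<open>auto simp: T_def\<close>)
  also have "\<dots> \<le> card T"
    by (rule card_image_le) (use finZ assms in \<open>auto simp: T_def\<close>)
  also have "card T = (\<Sum>z\<in>Z. card {v\<in>X j. Q (z(j:=v))})"
    unfolding T_def by (rule card_SigmaI) (use finZ assms in auto)
  also have "\<dots> \<le> (\<Sum>z\<in>Z. e)"
    by (rule sum_mono) (simp add: slice Z_def)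
  finally have "card {x\<in>PiE I X. Q x} \<le> e * card Z" by (simp add: mult.commute)
  moreover have "card (PiE I X) = card (X j) * card Z"
    using assms by (simp add: Z_def card_PiE prod.remove)
  ultimately show ?thesis by (simp add: mult_right_mono)
qed

lemma Fpn_less:
  assumes "0 < p" "x \<in> Fpn p n"
  shows "x i < p"
  using assms by (cases "i < n") (auto simp: Fpn_def)

definition moment_row :: "nat \<Rightarrow> nat \<Rightarrow> nat \<Rightarrow> (nat \<Rightarrow> nat) \<Rightarrow> (nat \<Rightarrow> nat)" where
  "moment_row p m a x = (\<lambda>q. if q < a then x q else if q < m then
      (x a ^ (q - a + 1) + (if q = m - 1 then x (a+1) else 0)) mod p else 0)"

definition moment_params :: "nat \<Rightarrow> nat \<Rightarrow> nat set \<Rightarrow> (nat \<Rightarrow> nat) set" where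
  "moment_params p a S = PiE {..<a+2} (\<lambda>j. if j = a+1 then S else {..<p})"

definition moment_form :: "nat \<Rightarrow> nat \<Rightarrow> nat \<Rightarrow> (nat \<Rightarrow> nat) \<Rightarrow> (nat \<Rightarrow> nat) \<Rightarrow> nat" where
  "moment_form m a c \<eta> x = c + (\<Sum>q<a. \<eta> q * x q) +
     (\<Sum>q\<in>{a..<m}. \<eta> q * (x a ^ (q - a + 1) + (if q = m - 1 then x (a+1) else 0)))"

lemma moment_form_mod:
  assumes "a < m"
  shows "(c + (\<Sum>q<m. \<eta> q * moment_row p m a x q)) mod p = moment_form m a c \<eta> x mod p"
proof -
  define h where "h = (\<lambda>q. x a ^ (q - a + 1) + (if q = m - 1 then x (a+1) else 0))"
  have "{..<m} = {..<a} \<union> {a..<m}" using assms by auto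
  then have "(\<Sum>q<m. \<eta> q * moment_row p m a x q) =
      (\<Sum>q<a. \<eta> q * moment_row p m a x q) + (\<Sum>q\<in>{a..<m}. \<eta> q * moment_row p m a x q)"
    by (simp add: sum.union_disjoint ivl_disj_int_one(2))
  also have "\<dots> = (\<Sum>q<a. \<eta> q * x q) + (\<Sum>q\<in>{a..<m}. \<eta> q * (h q mod p))"
    by (intro arg_cong2[where f = "(+)"] sum.cong) (auto simp: moment_row_def h_def)
  finally have sum_eq: "(\<Sum>q<m. \<eta> q * moment_row p m a x q) =
      (\<Sum>q<a. \<eta> q * x q) + (\<Sum>q\<in>{a..<m}. \<eta> q * (h q mod p))" .
  have "(c + (\<Sum>q<m. \<eta> q * moment_row p m a x q)) mod p =
      (c + (\<Sum>q<a. \<eta> q * x q) + (\<Sum>q\<in>{a..<m}. \<eta> q * (h q mod p)) mod p) mod p"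
    unfolding sum_eq add.assoc[symmetric] by (rule mod_add_right_eq[symmetric])
  also have "(\<Sum>q\<in>{a..<m}. \<eta> q * (h q mod p)) mod p = (\<Sum>q\<in>{a..<m}. \<eta> q * h q) mod p"
    by (subst mod_sum_eq[symmetric], subst (2) mod_sum_eq[symmetric]) (simp add: mod_mult_right_eq)
  finally show ?thesis
    by (simp add: moment_form_def h_def mod_add_right_eq)
qed

lemma card_moment_form_roots_power:
  assumes p: "prime p" and q0: "a \<le> q0" "q0 < m" "\<not> p dvd \<eta> q0"
  shows "card {v\<in>{..<p}. p dvd moment_form m a c \<eta> (z(a:=v))} \<le> m"
proof -
  define K where "K = c + (\<Sum>q<a. \<eta> q * z q) + (\<Sum>q\<in>{a..<m}. \<eta> q * (if q = m - 1 then z (a+1) else 0))"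
  define f where "f = [:int K:] + (\<Sum>q\<in>{a..<m}. monom (int (\<eta> q)) (q - a + 1))"
  have "moment_form m a c \<eta> (z(a:=v)) = K + (\<Sum>q\<in>{a..<m}. \<eta> q * v ^ (q - a + 1))" for v
    unfolding moment_form_def K_def by (simp add: sum.distrib distrib_left cong: if_cong)
  then have poly_f: "int (moment_form m a c \<eta> (z(a:=v))) = poly f (int v)" for v
    by (simp add: f_def poly_sum poly_monom)
  have "coeff f (q0 - a + 1) = (\<Sum>q\<in>{a..<m}. if q - a = q0 - a then int (\<eta> q) else 0)"
    by (simp add: f_def coeff_sum)
  also have "\<dots> = (\<Sum>q\<in>{a..<m}. if q = q0 then int (\<eta> q) else 0)"
    by (rule sum.cong) (use q0 in auto)
  also have "\<dots> = int (\<eta> q0)" using q0 by simp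
  finally have "\<not> int p dvd coeff f (q0 - a + 1)" using q0(3) by simp
  then have "card {t\<in>{..<p}. int p dvd poly f (int t)} \<le> degree f"
    using card_roots_mod_prime[OF p] by blast
  also have "degree f \<le> m"
  proof (rule degree_le, intro allI impI)
    fix i assume "m < i"
    then show "coeff f i = 0"
      by (cases i) (auto simp: f_def coeff_sum intro!: sum.neutral)
  qed
  finally show ?thesis by (simp add: poly_f[symmetric] del: of_nat_dvd_iff)
qed

lemma card_moment_form_roots_linear:
  assumes p: "prime p" and q0: "q0 < a" "\<not> p dvd \<eta> q0"
  shows "card {v\<in>{..<p}. p dvd moment_form m a c \<eta> (z(q0:=v))} \<le> 1"
proof -
  define K where "K = moment_form m a c \<eta> (z(q0:=0))"
  define f where "f = [:int K, int (\<eta> q0):]"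
  have "moment_form m a c \<eta> (z(q0:=v)) = \<eta> q0 * v + K" for v
    using q0(1) by (simp add: moment_form_def K_def sum.remove algebra_simps cong: if_cong)
  then have poly_f: "int (moment_form m a c \<eta> (z(q0:=v))) = poly f (int v)" for v
    by (simp add: f_def algebra_simps)
  have "\<not> int p dvd coeff f 1" using q0(2) by (simp add: f_def)
  then have "card {t\<in>{..<p}. int p dvd poly f (int t)} \<le> degree f"
    using card_roots_mod_prime[OF p] by blast
  also have "degree f \<le> 1" by (simp add: f_def)
  finally show ?thesis by (simp add: poly_f[symmetric])
qed

lemma card_moment_params_solutions:
  assumes p: "prime p" and am: "a < m" and S: "finite S"
    and q0: "q0 < m" "\<not> p dvd \<eta> q0"
  shows "card {x\<in>moment_params p a S. (c + (\<Sum>q<m. \<eta> q * moment_row p m a x q)) mod p = 0} * p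
         \<le> m * card (moment_params p a S)"
proof -
  define X where "X = (\<lambda>j. if j = a+1 then S else {..<p})"
  obtain j e where j: "j < a + 2" "j \<noteq> a + 1" and e: "e \<le> m"
    and slice: "\<And>z. card {v\<in>{..<p}. p dvd moment_form m a c \<eta> (z(j:=v))} \<le> e"
  proof (cases "a \<le> q0")
    case True
    then show ?thesis using that[of a m] card_moment_form_roots_power[where \<eta> = \<eta>, OF p True q0] by auto
  next
    case False
    then show ?thesis using that[of q0 1] card_moment_form_roots_linear[where \<eta> = \<eta>, OF p _ q0(2)] q0(1) by (auto simp: not_le)
  qed
  have "card {x\<in>PiE {..<a+2} X. p dvd moment_form m a c \<eta> x} * card (X j) \<le> e * card (PiE {..<a+2} X)"
    by (rule card_PiE_filter_le_slices) (use j slice S in \<open>auto simp: X_def\<close>)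
  also have "\<dots> \<le> m * card (PiE {..<a+2} X)" using e by simp
  finally show ?thesis
    using j moment_form_mod[OF am]
    by (simp add: moment_params_def X_def[symmetric] dvd_eq_mod_eq_0) (simp add: X_def)
qed

lemma moment_paramsD:
  assumes "x \<in> moment_params p a S"
  shows "j \<le> a \<Longrightarrow> x j < p" and "x (a+1) \<in> S"
  using PiE_mem[OF assms[unfolded moment_params_def], of j] PiE_mem[OF assms[unfolded moment_params_def], of "a+1"]
  by auto

lemma moment_row_Fpn:
  assumes "0 < p" "a < m" "x \<in> moment_params p a S"
  shows "moment_row p m a x \<in> Fpn p m"
  using assms(1,2) moment_paramsD(1)[OF assms(3)] by (auto simp: Fpn_def moment_row_def)

lemma inj_on_moment_row:
  assumes "0 < p" "a < m" "S \<subseteq> {..<p}"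
    and injective: "a + 1 < m \<or> S \<subseteq> {0}" \<comment> \<open>for a = m - 1 the row only sees x_a + x_{a+1}\<close>
  shows "inj_on (moment_row p m a) (moment_params p a S)"
proof
  fix x y assume x: "x \<in> moment_params p a S" and y: "y \<in> moment_params p a S"
    and eq: "moment_row p m a x = moment_row p m a y"
  have low: "x j = y j" if "j < a" for j
    using fun_cong[OF eq, of j] that by (simp add: moment_row_def)
  have top: "x a = y a \<and> x (a+1) = y (a+1)"
  proof (cases "a + 1 < m")
    case True
    have xa: "x a = y a"
      using fun_cong[OF eq, of a] True moment_paramsD(1)[OF x, of a] moment_paramsD(1)[OF y, of a]
      by (simp add: moment_row_def split: if_splits)
    have "moment_row p m a z (m - 1) = (z a ^ (m - a) + z (a+1)) mod p" for z
    proof -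
      have "m - 1 - a + 1 = m - a" "\<not> m - 1 < a" "m - 1 < m" using True by auto
      then show ?thesis by (simp add: moment_row_def)
    qed
    then have "(x a ^ (m - a) + x (a+1)) mod p = (x a ^ (m - a) + y (a+1)) mod p"
      using fun_cong[OF eq, of "m - 1"] xa by simp
    then have "x (a+1) mod p = y (a+1) mod p"
      using cong_add_lcancel_nat unfolding cong_def by blast
    moreover have "x (a+1) < p" "y (a+1) < p" using moment_paramsD(2)[OF x] moment_paramsD(2)[OF y] assms(3) by auto
    ultimately show ?thesis using xa by simp
  next
    case False
    then have "x (a+1) = 0" "y (a+1) = 0" "a = m - 1"
      using injective moment_paramsD[OF x] moment_paramsD[OF y] assms(2) by auto
    then show ?thesis
      using fun_cong[OF eq, of a] moment_paramsD(1)[OF x, of a] moment_paramsD(1)[OF y, of a] assms(2)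
      by (simp add: moment_row_def)
  qed
  show "x = y"
  proof (rule PiE_ext[OF x[unfolded moment_params_def] y[unfolded moment_params_def]])
    fix j assume "j \<in> {..<a+2}"
    then have "j < a \<or> j = a \<or> j = a + 1" by auto
    then show "x j = y j" using low top by auto
  qed
qed

lemma card_moment_params:
  assumes "finite S"
  shows "card (moment_params p a S) = p ^ (a + 1) * card S"
proof -
  have "card (moment_params p a S) = (\<Prod>j<a+1. card (if j = a+1 then S else {..<p})) * card S"
    by (simp add: moment_params_def card_PiE prod.lessThan_Suc)
  also have "(\<Prod>j<a+1. card (if j = a+1 then S else {..<p})) = (\<Prod>j<a+1. p)"
    by (rule prod.cong) auto
  finally show ?thesis by simp
qed

lemma card_moment_rows:
  assumes "0 < p" "a < m" "S \<subseteq> {..<p}" "finite S" "a + 1 < m \<or> S \<subseteq> {0}"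
  shows "card (moment_row p m a ` moment_params p a S) = p ^ (a + 1) * card S"
  using card_image[OF inj_on_moment_row[OF assms(1-3,5)]] card_moment_params[OF assms(4)] by simp

lemma moment_rows_equidistributed:
  assumes p: "prime p" and "a < m" "S \<subseteq> {..<p}" "finite S" "a + 1 < m \<or> S \<subseteq> {0}"
    and "q0 < m" "\<not> p dvd \<eta> q0"
  defines "R \<equiv> moment_row p m a ` moment_params p a S"
  shows "card {b\<in>R. (c + (\<Sum>q<m. \<eta> q * b q)) mod p = 0} * p \<le> m * card R"
proof -
  let ?sol = "{x\<in>moment_params p a S. (c + (\<Sum>q<m. \<eta> q * moment_row p m a x q)) mod p = 0}"
  have "0 < p" using p prime_gt_0_nat by blast
  have fin: "finite (moment_params p a S)"
    using assms(4) by (simp add: moment_params_def finite_PiE)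
  have "{b\<in>R. (c + (\<Sum>q<m. \<eta> q * b q)) mod p = 0} = moment_row p m a ` ?sol"
    unfolding R_def by auto
  then have "card {b\<in>R. (c + (\<Sum>q<m. \<eta> q * b q)) mod p = 0} \<le> card ?sol"
    using fin by (simp add: card_image_le)
  then have "card {b\<in>R. (c + (\<Sum>q<m. \<eta> q * b q)) mod p = 0} * p \<le> card ?sol * p"
    by simp
  also have "\<dots> \<le> m * card (moment_params p a S)"
    by (rule card_moment_params_solutions) (use assms in auto)
  also have "card (moment_params p a S) = card R"
    unfolding R_def using card_image[OF inj_on_moment_row[OF \<open>0 < p\<close> assms(2,3,5)]] by simp
  finally show ?thesis .
qed

definition graph_row :: "nat \<Rightarrow> (nat \<Rightarrow> nat) \<Rightarrow> nat \<Rightarrow> (nat \<Rightarrow> nat)" where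
  "graph_row k b i = (\<lambda>l. if l = i then 1 else if k \<le> l then b (l - k) else 0)"

definition graph_basis :: "nat \<Rightarrow> (nat \<Rightarrow> nat \<Rightarrow> nat) \<Rightarrow> (nat \<Rightarrow> nat) list" where
  "graph_basis k B = map (\<lambda>i. graph_row k (B i) i) [0..<k]"

definition graph_space :: "nat \<Rightarrow> nat \<Rightarrow> (nat \<Rightarrow> nat \<Rightarrow> nat) \<Rightarrow> (nat \<Rightarrow> nat) set" where
  "graph_space p k B = span_p p (graph_basis k B)"

lemma lin_comb_graph_basis:
  "lin_comb p (graph_basis k B) c l = (\<Sum>j<k. c j * graph_row k (B j) j l) mod p"
  unfolding lin_comb_def graph_basis_def by (auto intro!: sum.cong arg_cong[where f="\<lambda>x. x mod p"])

lemma lin_comb_graph_basis_low: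
  assumes "l < k"
  shows "lin_comb p (graph_basis k B) c l = c l mod p"
proof -
  have "(\<Sum>j<k. c j * graph_row k (B j) j l) = (\<Sum>j<k. if j = l then c j else 0)"
    using assms by (intro sum.cong) (auto simp: graph_row_def)
  then show ?thesis using assms by (simp add: lin_comb_graph_basis)
qed

lemma lin_comb_graph_basis_high:
  "lin_comb p (graph_basis k B) c (k + q) = (\<Sum>j<k. c j * B j q) mod p"
proof -
  have "(\<Sum>j<k. c j * graph_row k (B j) j (k + q)) = (\<Sum>j<k. c j * B j q)"
    by (intro sum.cong) (auto simp: graph_row_def)
  then show ?thesis by (simp add: lin_comb_graph_basis)
qed

lemma graph_row_Fpn:
  assumes "1 < p" "b \<in> Fpn p m" "i < k"
  shows "graph_row k b i \<in> Fpn p (k + m)"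
  using assms unfolding Fpn_def graph_row_def by auto

lemma graph_space_Gr:
  assumes "1 < p" "\<And>i. i < k \<Longrightarrow> B i \<in> Fpn p m"
  shows "graph_space p k B \<in> Gr p (k + m) k"
proof -
  have "set (graph_basis k B) \<subseteq> Fpn p (k + m)"
    using graph_row_Fpn[OF assms(1)] assms(2) by (auto simp: graph_basis_def)
  moreover have "lin_indep_p p (graph_basis k B)"
    unfolding lin_indep_p_def
  proof (intro allI impI)
    fix c j assume "lin_comb p (graph_basis k B) c = zero_vec" "j < length (graph_basis k B)"
    then show "c j mod p = 0"
      using lin_comb_graph_basis_low[of j k p B c] by (simp add: zero_vec_def graph_basis_def)
  qed
  moreover have "length (graph_basis k B) = k" by (simp add: graph_basis_def)
  ultimately show ?thesis
    unfolding Gr_def graph_space_def by blast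
qed

lemma graph_row_in_graph_space:
  assumes "1 < p" "B i \<in> Fpn p m" "i < k"
  shows "graph_row k (B i) i \<in> graph_space p k B"
proof -
  have "lin_comb p (graph_basis k B) (\<lambda>j. if j = i then 1 else 0) l = graph_row k (B i) i l" for l
  proof -
    have "(\<Sum>j<k. (if j = i then 1 else 0) * graph_row k (B j) j l) = graph_row k (B i) i l"
      using assms(3) by (simp add: if_distrib[where f = "\<lambda>c. c * _"] cong: if_cong)
    moreover have "graph_row k (B i) i l < p"
      using assms Fpn_less[OF _ assms(2), of "l - k"] by (auto simp: graph_row_def)
    ultimately show ?thesis by (simp add: lin_comb_graph_basis)
  qed
  then have "lin_comb p (graph_basis k B) (\<lambda>j. if j = i then 1 else 0) = graph_row k (B i) i" ..
  then show ?thesis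
    unfolding graph_space_def span_p_def by (intro CollectI exI[of _ "\<lambda>j. if j = i then 1 else 0"]) simp
qed

lemma graph_space_eq_imp_row_eq:
  assumes p: "1 < p" and B: "\<And>j. j < k \<Longrightarrow> B j \<in> Fpn p m" and B': "\<And>j. j < k \<Longrightarrow> B' j \<in> Fpn p m"
    and eq: "graph_space p k B = graph_space p k B'" and i: "i < k"
  shows "B i = B' i"
proof
  fix q
  have "graph_row k (B i) i \<in> graph_space p k B'"
    using graph_row_in_graph_space[where B = B, OF p B[OF i] i] eq by simp
  then obtain c where c: "graph_row k (B i) i = lin_comb p (graph_basis k B') c"
    unfolding graph_space_def span_p_def by blast
  have c_unit: "c l mod p = (if l = i then 1 else 0)" if "l < k" for l
    using fun_cong[OF c, of l] lin_comb_graph_basis_low[OF that] that i p by (auto simp: graph_row_def)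
  have "B i q = (\<Sum>j<k. c j * B' j q) mod p"
    using fun_cong[OF c, of "k + q"] i by (simp add: graph_row_def lin_comb_graph_basis_high)
  also have "\<dots> = (\<Sum>j<k. (c j mod p) * B' j q) mod p"
    by (subst mod_sum_eq[symmetric], subst (2) mod_sum_eq[symmetric]) (simp add: mod_mult_left_eq)
  also have "(\<Sum>j<k. (c j mod p) * B' j q) = B' i q"
    using i by (simp add: c_unit if_distrib[where f = "\<lambda>x. x * _"] cong: if_cong)
  finally show "B i q = B' i q"
    using Fpn_less[OF _ B'[OF i], of q] p by simp
qed

lemma inj_on_graph_space:
  assumes "1 < p" "\<And>i. i < k \<Longrightarrow> R i \<subseteq> Fpn p m"
  shows "inj_on (graph_space p k) (PiE {..<k} R)"
proof
  fix B B' assume B: "B \<in> PiE {..<k} R" and B': "B' \<in> PiE {..<k} R"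
    and eq: "graph_space p k B = graph_space p k B'"
  have "B j \<in> Fpn p m" "B' j \<in> Fpn p m" if "j < k" for j
    using B B' assms(2)[OF that] that by (auto simp: PiE_iff)
  then have "B i = B' i" if "i < k" for i
    using graph_space_eq_imp_row_eq[OF assms(1) _ _ eq that] by blast
  then show "B = B'" using B B' by (intro PiE_ext) auto
qed

lemma dot_p_graph_row:
  assumes "i < k"
  shows "dot_p p (k + m) \<xi> (graph_row k b i) = (\<xi> i + (\<Sum>q<m. \<xi> (k + q) * b q)) mod p"
proof -
  have "(\<Sum>l<k + m. \<xi> l * graph_row k b i l) =
      (\<Sum>l<k. \<xi> l * graph_row k b i l) + (\<Sum>q<m. \<xi> (k + q) * graph_row k b i (k + q))"
    by (induction m) (simp_all add: ac_simps)
  also have "(\<Sum>l<k. \<xi> l * graph_row k b i l) = \<xi> i"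
    using assms by (simp add: graph_row_def if_distrib[where f = "\<lambda>x. _ * x"] cong: if_cong)
  also have "(\<Sum>q<m. \<xi> (k + q) * graph_row k b i (k + q)) = (\<Sum>q<m. \<xi> (k + q) * b q)"
    using assms by (intro sum.cong) (auto simp: graph_row_def)
  finally show ?thesis by (simp add: dot_p_def)
qed

lemma Per_graph_spaceD:
  assumes "1 < p" "B i \<in> Fpn p m" "i < k" "\<xi> \<in> Per p (k + m) (graph_space p k B)"
  shows "(\<xi> i + (\<Sum>q<m. \<xi> (k + q) * B i q)) mod p = 0"
  using assms graph_row_in_graph_space[where B = B, OF assms(1-3)] dot_p_graph_row[OF assms(3)]
  unfolding Per_def by fastforce

lemma card_Per_graph_spaces_le_prod:
  assumes p: "1 < p" and R: "\<And>i. i < k \<Longrightarrow> R i \<subseteq> Fpn p m" "\<And>i. i < k \<Longrightarrow> finite (R i)"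
  shows "card {W \<in> graph_space p k ` PiE {..<k} R. \<xi> \<in> Per p (k + m) W}
           \<le> (\<Prod>i<k. card {b\<in>R i. (\<xi> i + (\<Sum>q<m. \<xi> (k + q) * b q)) mod p = 0})"
proof -
  define T where "T i = {b\<in>R i. (\<xi> i + (\<Sum>q<m. \<xi> (k + q) * b q)) mod p = 0}" for i
  have "{W \<in> graph_space p k ` PiE {..<k} R. \<xi> \<in> Per p (k + m) W} \<subseteq> graph_space p k ` PiE {..<k} T"
  proof
    fix W assume "W \<in> {W \<in> graph_space p k ` PiE {..<k} R. \<xi> \<in> Per p (k + m) W}"
    then obtain B where B: "B \<in> PiE {..<k} R" "W = graph_space p k B" "\<xi> \<in> Per p (k + m) W"
      by blast
    have "B i \<in> T i" if "i < k" for i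
    proof -
      have "B i \<in> R i" using B(1) that by auto
      with R(1)[OF that] Per_graph_spaceD[OF p _ that, of B] B(2,3) show ?thesis
        by (auto simp: T_def)
    qed
    then have "B \<in> PiE {..<k} T" using B(1) by (auto simp: PiE_iff)
    then show "W \<in> graph_space p k ` PiE {..<k} T" using B(2) by blast
  qed
  moreover have "finite (PiE {..<k} T)"
    using R(2) by (intro finite_PiE) (auto simp: T_def)
  ultimately have "card {W \<in> graph_space p k ` PiE {..<k} R. \<xi> \<in> Per p (k + m) W} \<le> card (PiE {..<k} T)"
    by (meson card_image_le card_mono finite_imageI le_trans)
  then show ?thesis by (simp add: card_PiE T_def)
qed

lemma Fpn_nonzero_tail_zero:
  assumes "0 < p" "\<xi> \<in> Fpn p (k + m) - {zero_vec}" "\<forall>q<m. p dvd \<xi> (k + q)"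
  shows "\<forall>q<m. \<xi> (k + q) = 0" and "\<exists>i<k. \<xi> i \<noteq> 0"
proof -
  show tail: "\<forall>q<m. \<xi> (k + q) = 0"
    using assms Fpn_less[of p \<xi> "k + m"] nat_dvd_not_less by blast
  obtain l where l: "\<xi> l \<noteq> 0" using assms(2) by (auto simp: zero_vec_def)
  have "l < k + m" using assms(2) l by (auto simp: Fpn_def not_less[symmetric])
  have "l < k"
  proof (rule ccontr)
    assume "\<not> l < k"
    then have "l - k < m" "k + (l - k) = l" using \<open>l < k + m\<close> by auto
    then show False using tail l by metis
  qed
  then show "\<exists>i<k. \<xi> i \<noteq> 0" using l by blast
qed

lemma card_Per_graph_spaces_le:
  assumes p: "1 < p"
    and R: "\<And>i. i < k \<Longrightarrow> R i \<subseteq> Fpn p m" "\<And>i. i < k \<Longrightarrow> finite (R i)"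
    and equidistributed: "\<And>i c \<eta>. i < k \<Longrightarrow> \<exists>q<m. \<not> p dvd \<eta> q \<Longrightarrow>
          card {b\<in>R i. (c + (\<Sum>q<m. \<eta> q * b q)) mod p = 0} * p \<le> m * card (R i)"
    and \<xi>: "\<xi> \<in> Fpn p (k + m) - {zero_vec}"
  shows "card {W \<in> graph_space p k ` PiE {..<k} R. \<xi> \<in> Per p (k + m) W} * p ^ k
           \<le> m ^ k * (\<Prod>i<k. card (R i))"
proof -
  define T where "T i = {b\<in>R i. (\<xi> i + (\<Sum>q<m. \<xi> (k + q) * b q)) mod p = 0}" for i
  have le_prod: "card {W \<in> graph_space p k ` PiE {..<k} R. \<xi> \<in> Per p (k + m) W} \<le> (\<Prod>i<k. card (T i))"
    unfolding T_def by (rule card_Per_graph_spaces_le_prod[OF p R])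
  show ?thesis
  proof (cases "\<exists>q<m. \<not> p dvd \<xi> (k + q)")
    case True
    have "card {W \<in> graph_space p k ` PiE {..<k} R. \<xi> \<in> Per p (k + m) W} * p ^ k
        \<le> (\<Prod>i<k. card (T i) * p)"
      using le_prod by (simp add: prod.distrib)
    also have "\<dots> \<le> (\<Prod>i<k. m * card (R i))"
      by (rule prod_mono) (use equidistributed[OF _ True] in \<open>simp add: T_def\<close>)
    finally show ?thesis by (simp add: prod.distrib)
  next
    case False
    then obtain i where "i < k" "\<xi> i \<noteq> 0" and tail: "\<forall>q<m. \<xi> (k + q) = 0"
      using Fpn_nonzero_tail_zero[of p \<xi> k m] \<xi> p by auto
    moreover have "\<xi> i < p" using Fpn_less[of p \<xi> "k + m" i] \<xi> p by auto
    ultimately have "T i = {}" by (auto simp: T_def)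
    then have "(\<Prod>i<k. card (T i)) = 0"
      using \<open>i < k\<close> by (metis card.empty lessThan_iff finite_lessThan prod_zero)
    with le_prod have "card {W \<in> graph_space p k ` PiE {..<k} R. \<xi> \<in> Per p (k + m) W} = 0"
      by (simp only: le_zero_eq)
    then show ?thesis by simp
  qed
qed

lemma exists_row_exponents:
  fixes k d m :: nat
  assumes "1 \<le> k" "k \<le> d" "d < m * k"
  obtains a where "\<And>i. i < k \<Longrightarrow> a i < m" "a (k - 1) + 1 < m" "(\<Sum>i<k. a i + 1) = d"
proof -
  define r where "r = d - k"
  define a where "a i = r div k + (if i < r mod k then 1 else 0)" for i
  have "r < (m - 1) * k" using assms unfolding r_def by (simp add: diff_mult_distrib)
  then have quotient: "r div k < m - 1" using assms(1) by (simp add: div_less_iff_less_mult)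
  have remainder: "r mod k < k" using assms(1) by simp
  then have "{i\<in>{..<k}. i < r mod k} = {..<r mod k}" by auto
  then have "(\<Sum>i<k. if i < r mod k then 1 else 0::nat) = r mod k"
    using sum.inter_filter[of "{..<k}" "\<lambda>_. 1::nat" "\<lambda>i. i < r mod k"] by simp
  then have "(\<Sum>i<k. a i + 1) = k * (r div k) + r mod k + k"
    by (simp only: a_def sum.distrib) simp
  also have "\<dots> = d" using assms(2) by (simp add: r_def)
  finally have "(\<Sum>i<k. a i + 1) = d" .
  moreover have "a i < m" for i using quotient by (simp add: a_def, linarith)
  moreover have "\<not> k - 1 < r mod k" using remainder by linarith
  then have "a (k - 1) + 1 < m" using quotient by (simp add: a_def)
  ultimately show ?thesis using that by blast
qed

lemma exists_graph_family:
  assumes p: "prime p" and k: "1 \<le> k" "k \<le> d" "d < m * k" and s: "s \<le> p"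
  shows "\<exists>G. G \<subseteq> Gr p (k + m) k \<and> card G = p ^ d * s \<and>
           (\<forall>\<xi>\<in>Fpn p (k + m) - {zero_vec}. card {W\<in>G. \<xi> \<in> Per p (k + m) W} * p ^ k \<le> m ^ k * card G)"
proof -
  have "1 < p" using p prime_gt_1_nat by blast
  obtain a where a: "\<And>i. i < k \<Longrightarrow> a i < m" "a (k - 1) + 1 < m" "(\<Sum>i<k. a i + 1) = d"
    using exists_row_exponents[OF k] by blast
  define S where "S i = (if i = k - 1 then {..<s} else {0})" for i
  define R where "R i = moment_row p m (a i) ` moment_params p (a i) (S i)" for i
  define G where "G = graph_space p k ` PiE {..<k} R"
  have S: "S i \<subseteq> {..<p}" "finite (S i)" "a i + 1 < m \<or> S i \<subseteq> {0}" if "i < k" for i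
    using s \<open>1 < p\<close> a(2) by (auto simp: S_def)
  have R_Fpn: "R i \<subseteq> Fpn p m" if "i < k" for i
    using moment_row_Fpn[of p "a i" m] \<open>1 < p\<close> a(1) that by (auto simp: R_def)
  have R_finite: "finite (R i)" if "i < k" for i
    using S(2)[OF that] by (simp add: R_def moment_params_def finite_PiE)
  have card_R: "card (R i) = p ^ (a i + 1) * card (S i)" if "i < k" for i
    unfolding R_def using card_moment_rows \<open>1 < p\<close> a(1) S that by simp
  have card_G_prod: "card G = (\<Prod>i<k. card (R i))"
    unfolding G_def using inj_on_graph_space[OF \<open>1 < p\<close> R_Fpn] by (simp add: card_image card_PiE)
  also have "\<dots> = (\<Prod>i<k. p ^ (a i + 1) * card (S i))" by (simp add: card_R)
  also have "\<dots> = p ^ (\<Sum>i<k. a i + 1) * (\<Prod>i<k. card (S i))"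
    by (simp only: prod.distrib power_sum)
  also have "(\<Prod>i<k. card (S i)) = (\<Prod>i<k. if i = k - 1 then s else 1)"
    by (rule prod.cong) (auto simp: S_def)
  also have "\<dots> = s" using k(1) by (simp add: prod.delta)
  finally have card_G: "card G = p ^ d * s" using a(3) by simp
  have "G \<subseteq> Gr p (k + m) k"
  proof
    fix W assume "W \<in> G"
    then obtain B where B: "B \<in> PiE {..<k} R" "W = graph_space p k B" unfolding G_def by blast
    then have "B i \<in> Fpn p m" if "i < k" for i using R_Fpn[OF that] that by auto
    then show "W \<in> Gr p (k + m) k" using graph_space_Gr[OF \<open>1 < p\<close>] B(2) by blast
  qed
  moreover have "card {W\<in>G. \<xi> \<in> Per p (k + m) W} * p ^ k \<le> m ^ k * card G"
    if "\<xi> \<in> Fpn p (k + m) - {zero_vec}" for \<xi>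
    unfolding card_G_prod unfolding G_def
    by (rule card_Per_graph_spaces_le[OF \<open>1 < p\<close> R_Fpn R_finite _ that])
       (use moment_rows_equidistributed[OF p a(1) S] in \<open>auto simp: R_def\<close>)
  ultimately show ?thesis using card_G by blast
qed

lemma exists_powr_approx:
  fixes p :: nat and \<alpha> :: real
  assumes "1 < p" "0 \<le> \<alpha>"
  obtains s where "s \<le> p" "real p powr \<alpha> \<le> real (p ^ nat \<lfloor>\<alpha>\<rfloor> * s)"
    "real (p ^ nat \<lfloor>\<alpha>\<rfloor> * s) \<le> 2 * real p powr \<alpha>"
proof -
  define d where "d = nat \<lfloor>\<alpha>\<rfloor>"
  define x where "x = real p powr (\<alpha> - real d)"
  have d: "real d \<le> \<alpha>" "\<alpha> < real d + 1" using assms(2) by (auto simp: d_def)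
  have "1 \<le> x" unfolding x_def using assms(1) d(1) by (simp add: ge_one_powr_ge_zero)
  have "x \<le> real p powr 1" unfolding x_def using assms(1) d(2) by (intro powr_mono) auto
  then have "nat \<lceil>x\<rceil> \<le> p" using assms(1) by (simp add: nat_le_iff ceiling_le_iff)
  have "real p powr \<alpha> = real p ^ d * x"
    using assms(1) by (simp add: x_def powr_diff powr_realpow)
  moreover have "x \<le> real (nat \<lceil>x\<rceil>)" "real (nat \<lceil>x\<rceil>) \<le> 2 * x"
    using \<open>1 \<le> x\<close> by linarith+
  ultimately show ?thesis
    using that[of "nat \<lceil>x\<rceil>"] \<open>nat \<lceil>x\<rceil> \<le> p\<close> assms(1) by (simp add: d_def mult_left_mono)
qed

lemma exists_graph_family_of_size:
  fixes \<alpha> :: real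
  assumes p: "prime p" and k: "1 \<le> k" "real k < \<alpha>" "\<alpha> < real (m * k)"
  shows "\<exists>G. G \<subseteq> Gr p (k + m) k \<and> real p powr \<alpha> \<le> real (card G) \<and> real (card G) \<le> 2 * real p powr \<alpha> \<and>
           (\<forall>\<xi>\<in>Fpn p (k + m) - {zero_vec}.
              real (card {W\<in>G. \<xi> \<in> Per p (k + m) W}) \<le> real m ^ k * real (card G) * real p powr (- real k))"
proof -
  define d where "d = nat \<lfloor>\<alpha>\<rfloor>"
  have "0 \<le> \<alpha>" "\<lfloor>\<alpha>\<rfloor> < int (m * k)" using k(2,3) by (simp_all add: floor_less_iff)
  then have d: "k \<le> d" "d < m * k"
    using k(2) by (auto simp: d_def le_nat_floor nat_less_iff)
  have "1 < p" using p prime_gt_1_nat by blast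
  obtain s where s: "s \<le> p" "real p powr \<alpha> \<le> real (p ^ d * s)" "real (p ^ d * s) \<le> 2 * real p powr \<alpha>"
    using exists_powr_approx[OF \<open>1 < p\<close> \<open>0 \<le> \<alpha>\<close>] unfolding d_def by auto
  obtain G where G: "G \<subseteq> Gr p (k + m) k" "card G = p ^ d * s"
    "\<forall>\<xi>\<in>Fpn p (k + m) - {zero_vec}. card {W\<in>G. \<xi> \<in> Per p (k + m) W} * p ^ k \<le> m ^ k * card G"
    using exists_graph_family[OF p k(1) d s(1)] by blast
  have "real (card {W\<in>G. \<xi> \<in> Per p (k + m) W}) \<le> real m ^ k * real (card G) * real p powr (- real k)"
    if "\<xi> \<in> Fpn p (k + m) - {zero_vec}" for \<xi>
  proof -
    have "real (card {W\<in>G. \<xi> \<in> Per p (k + m) W}) * real p ^ k \<le> real m ^ k * real (card G)"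
      using of_nat_mono[OF bspec[OF G(3) that], where 'a = real] by simp
    moreover have "real p powr (- real k) = 1 / real p ^ k"
      using \<open>1 < p\<close> by (simp add: powr_minus powr_realpow divide_inverse)
    ultimately show ?thesis using \<open>1 < p\<close> by (simp add: pos_le_divide_eq)
  qed
  then show ?thesis using G(1) s(2,3)[folded G(2)] by blast
qed

theorem corollary3p4:
  fixes n m :: nat and \<alpha> :: real
  assumes "n \<ge> 2" and "1 \<le> m" and "m \<le> n - 1"
    and "real (n - m) < \<alpha>" and "\<alpha> < real (m * (n - m))"
  shows "\<exists>C>0. \<forall>p::nat. prime p \<longrightarrow>
           (\<exists>G. G \<subseteq> Gr p n (n - m) \<and>
                real p powr \<alpha> \<le> C * real (card G) \<and>
                real (card G) \<le> C * real p powr \<alpha> \<and>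
                (\<forall>\<xi>\<in>Fpn p n - {zero_vec}.
                   real (card {W\<in>G. \<xi> \<in> Per p n W})
                     \<le> C * real (card G) * real p powr (- real (n - m))))"
proof -
  define k where "k = n - m"
  have k: "1 \<le> k" "n = k + m" using assms(1-3) by (auto simp: k_def)
  have \<alpha>: "real k < \<alpha>" "\<alpha> < real (m * k)" using assms(4,5) by (simp_all only: k_def)
  define C where "C = 2 * real m ^ k"
  have "1 \<le> real m ^ k" using assms(2) by simp
  then have C: "2 \<le> C" "real m ^ k \<le> C" by (auto simp: C_def)
  have "\<exists>G. G \<subseteq> Gr p n (n - m) \<and> real p powr \<alpha> \<le> C * real (card G) \<and>
          real (card G) \<le> C * real p powr \<alpha> \<and> (\<forall>\<xi>\<in>Fpn p n - {zero_vec}.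
            real (card {W\<in>G. \<xi> \<in> Per p n W}) \<le> C * real (card G) * real p powr (- real (n - m)))"
    if p: "prime p" for p
  proof -
    obtain G where G: "G \<subseteq> Gr p n k" "real p powr \<alpha> \<le> real (card G)" "real (card G) \<le> 2 * real p powr \<alpha>"
      "\<forall>\<xi>\<in>Fpn p n - {zero_vec}.
         real (card {W\<in>G. \<xi> \<in> Per p n W}) \<le> real m ^ k * real (card G) * real p powr (- real k)"
      using exists_graph_family_of_size[OF p k(1) \<alpha>] unfolding k(2)[symmetric] by blast
    have incidence_mono: "real m ^ k * real (card G) * real p powr (- real k)
        \<le> C * real (card G) * real p powr (- real k)"
      using C(2) by (intro mult_right_mono) auto
    have scale: "real (card G) \<le> C * real (card G)" "2 * real p powr \<alpha> \<le> C * real p powr \<alpha>"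
      using C(1) by (simp_all add: mult_le_cancel_right1 mult_right_mono)
    show ?thesis
      unfolding k_def[symmetric]
    proof (intro exI[of _ G] conjI)
      show "G \<subseteq> Gr p n k" by (rule G(1))
      show "real p powr \<alpha> \<le> C * real (card G)" using G(2) scale(1) by linarith
      show "real (card G) \<le> C * real p powr \<alpha>" using G(3) scale(2) by linarith
      show "\<forall>\<xi>\<in>Fpn p n - {zero_vec}.
          real (card {W\<in>G. \<xi> \<in> Per p n W}) \<le> C * real (card G) * real p powr (- real k)"
        using G(4) incidence_mono by (blast intro: order_trans)
    qed
  qed
  then show ?thesis using C(1) by (intro exI[of _ C]) auto
qed

end
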